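(* Let $m,k,n\ge1$ be integers; let $\lambda_i,\mu_i>0$ ($i\le k$), $\alpha_j,\beta_j,u_j,v_j>0$ ($j\le n$); let $\theta:\{0,\dots,m\}\to\mathbb{R}$ satisfy $0\le\theta\le1$, $\theta(b)>0$ for $b<m$, $\theta(m)=0$. Consider the CTMC on the set $\mathcal{S}$ of vectors $(x_1,\dots,x_k;a_1,\dots,a_n)$, $x_i\in\mathbb{Z}_{\ge0}$, $a_j\in\{I,W,T\}$, with $\mathrm{busy}(w)=\sum_i x_i+\sum_j1_{\{a_j=T\}}\le m$, whose only nonzero rates are: $x\to x+e_i$ at rate $\lambda_i\theta(\mathrm{busy}(w))$ and $x+e_i\to x$ at rate $(x_i+1)\mu_i$; and, for each $j$ changing only $a_j$: $I\to W$ at rate $\alpha_j$, $W\to I$ at rate $\beta_j$, $W\to T$ at rate $u_j\theta(\mathrm{busy}(w))$ ($w$ the current state), $T\to W$ at rate $v_j$. Its steady state distribution is $p(w)=B\big(\prod_{r=0}^{\mathrm{busy}(w)-1}\theta(r)\big)\big(\prod_{i}\rho_i^{x_i}/x_i!\big)\prod_j(\alpha_j/\beta_j)^{1_{\{a_j=W\}}}(\alpha_ju_j/(\beta_jv_j))^{1_{\{a_j=T\}}}$ with normalizing constant $B$, where $\rho_i=\lambda_i/\mu_i$. For $a=(a_1,\dots,a_n)$ let $\mathrm{busy}_p(a)=\sum_{j=1}^n1_{\{a_j=T\}}$, and call $(x,a)$ with $x\in\mathbb{Z}_{\ge0}$ legitimate if $x+\mathrm{busy}_p(a)\le m$. Let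 $q(x;a_1,\dots,a_n)$ be the steady state probability that $\sum_{i=1}^kx_i=x$ and the persistent user states are $(a_1,\dots,a_n)$. Then for every legitimate $(x,a)$, $$q(x;a_1,\dots,a_n)=B\cdot\Big(\prod_{r=0}^{x+\mathrm{busy}_p(a)-1}\theta(r)\Big)\prod_{j=1}^n\Big(\frac{\alpha_j}{\beta_j}\Big)^{1_{\{a_j=W\}}}\Big(\frac{\alpha_ju_j}{\beta_jv_j}\Big)^{1_{\{a_j=T\}}}\frac{\rho^x}{x!},$$ with $\rho=\sum_{i=1}^k\rho_i$. Further, in the special case with no non-persistent users (the analogous CTMC on persistent states $a$ alone, i.e. $\rho\to0$), the steady state probability of $(a_1,\dots,a_n)$ is $$q(a_1,\dots,a_n)=B\cdot\Big(\prod_{r=0}^{\mathrm{busy}_p(a)-1}\theta(r)\Big)\prod_{j=1}^n\Big(\frac{\alpha_j}{\beta_j}\Big)^{1_{\{a_j=W\}}}\Big(\frac{\alpha_ju_j}{\beta_jv_j}\Big)^{1_{\{a_j=T\}}},$$ with $B$ the corresponding normalizing constant.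
   Context: Multi-channel access model with $m$ channels, $k$ classes of non-persistent users and $n$ persistent users with activity states Idle ($I$), Waiting ($W$), Transmitting ($T$). Empty products $\prod_{r=0}^{-1}\theta(r)$ equal $1$. *)

theory Defs
  imports Complex_Main
begin

datatype act = I | W | T

text \<open>A full state: occupancy vector x (classes indexed 0..<k) and persistent user
  states a (users indexed 0..<n); components outside the index ranges are fixed
  to 0 resp. I so that the state space is finite.\<close>
type_synonym state = "(nat \<Rightarrow> nat) \<times> (nat \<Rightarrow> act)"

definition busy_p :: "nat \<Rightarrow> (nat \<Rightarrow> act) \<Rightarrow> nat" where
  "busy_p n a = card {j. j < n \<and> a j = T}"

definition busy :: "nat \<Rightarrow> nat \<Rightarrow> state \<Rightarrow> nat" where
  "busy k n w = (\<Sum>i<k. fst w i) + busy_p n (snd w)"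

definition pstates :: "nat \<Rightarrow> nat \<Rightarrow> (nat \<Rightarrow> act) set" where
  "pstates m n = {a. (\<forall>j\<ge>n. a j = I) \<and> busy_p n a \<le> m}"

definition states :: "nat \<Rightarrow> nat \<Rightarrow> nat \<Rightarrow> state set" where
  "states m k n = {w. (\<forall>i\<ge>k. fst w i = 0) \<and> (\<forall>j\<ge>n. snd w j = I) \<and> busy k n w \<le> m}"

definition prate :: "nat \<Rightarrow> (nat \<Rightarrow> real) \<Rightarrow> (nat \<Rightarrow> real) \<Rightarrow> (nat \<Rightarrow> real) \<Rightarrow> (nat \<Rightarrow> real)
    \<Rightarrow> real \<Rightarrow> (nat \<Rightarrow> act) \<Rightarrow> (nat \<Rightarrow> act) \<Rightarrow> real" where
  "prate n \<alpha> \<beta> u v thb a a' =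
     (\<Sum>j<n. (if a j = I \<and> a' = a(j := W) then \<alpha> j else 0)
           + (if a j = W \<and> a' = a(j := I) then \<beta> j else 0)
           + (if a j = W \<and> a' = a(j := T) then u j * thb else 0)
           + (if a j = T \<and> a' = a(j := W) then v j else 0))"

definition rate :: "nat \<Rightarrow> nat \<Rightarrow> (nat \<Rightarrow> real) \<Rightarrow> (nat \<Rightarrow> real) \<Rightarrow> (nat \<Rightarrow> real)
    \<Rightarrow> (nat \<Rightarrow> real) \<Rightarrow> (nat \<Rightarrow> real) \<Rightarrow> (nat \<Rightarrow> real) \<Rightarrow> (nat \<Rightarrow> real)
    \<Rightarrow> state \<Rightarrow> state \<Rightarrow> real" where
  "rate k n lam \<mu> \<alpha> \<beta> u v \<theta> w w' =
     (let x = fst w; a = snd w; x' = fst w'; a' = snd w'; thb = \<theta> (busy k n w) in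
      (\<Sum>i<k. (if a' = a \<and> x' = x(i := x i + 1) then lam i * thb else 0)
            + (if a' = a \<and> x = x'(i := x' i + 1) then real (x' i + 1) * \<mu> i else 0))
      + (if x' = x then prate n \<alpha> \<beta> u v thb a a' else 0))"

definition prate_only :: "nat \<Rightarrow> (nat \<Rightarrow> real) \<Rightarrow> (nat \<Rightarrow> real) \<Rightarrow> (nat \<Rightarrow> real)
    \<Rightarrow> (nat \<Rightarrow> real) \<Rightarrow> (nat \<Rightarrow> real) \<Rightarrow> (nat \<Rightarrow> act) \<Rightarrow> (nat \<Rightarrow> act) \<Rightarrow> real" where
  "prate_only n \<alpha> \<beta> u v \<theta> a a' = prate n \<alpha> \<beta> u v (\<theta> (busy_p n a)) a a'"

definition stationary :: "'s set \<Rightarrow> ('s \<Rightarrow> 's \<Rightarrow> real) \<Rightarrow> ('s \<Rightarrow> real) \<Rightarrow> bool" where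
  "stationary S Q \<pi> \<longleftrightarrow>
     (\<forall>w\<in>S. \<pi> w \<ge> 0) \<and> (\<Sum>w\<in>S. \<pi> w) = 1 \<and>
     (\<forall>w\<in>S. \<pi> w * (\<Sum>w'\<in>S - {w}. Q w w') = (\<Sum>w'\<in>S - {w}. \<pi> w' * Q w' w))"

definition pweight :: "nat \<Rightarrow> (nat \<Rightarrow> real) \<Rightarrow> (nat \<Rightarrow> real) \<Rightarrow> (nat \<Rightarrow> real) \<Rightarrow> (nat \<Rightarrow> real)
    \<Rightarrow> (nat \<Rightarrow> act) \<Rightarrow> real" where
  "pweight n \<alpha> \<beta> u v a =
     (\<Prod>j<n. (if a j = W then \<alpha> j / \<beta> j else 1)
           * (if a j = T then \<alpha> j * u j / (\<beta> j * v j) else 1))"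

definition weight :: "nat \<Rightarrow> nat \<Rightarrow> (nat \<Rightarrow> real) \<Rightarrow> (nat \<Rightarrow> real) \<Rightarrow> (nat \<Rightarrow> real) \<Rightarrow> (nat \<Rightarrow> real)
    \<Rightarrow> (nat \<Rightarrow> real) \<Rightarrow> (nat \<Rightarrow> real) \<Rightarrow> (nat \<Rightarrow> real) \<Rightarrow> state \<Rightarrow> real" where
  "weight k n lam \<mu> \<alpha> \<beta> u v \<theta> w =
     (\<Prod>r<busy k n w. \<theta> r) * (\<Prod>i<k. (lam i / \<mu> i) ^ fst w i / fact (fst w i))
     * pweight n \<alpha> \<beta> u v (snd w)"

end

theory Submission
  imports Defs
begin

text \<open>The product-form weight satisfies detailed balance: for an arrival of class i and the
  matching departure, and for the moves I \<leftrightarrow> W and W \<leftrightarrow> T of a persistent user, the ratio of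
  forward and backward rates equals the ratio of the weights; for the moves that seize a
  channel the rate factor \<theta>(busy) is exactly the factor added to \<Prod>\<theta>(r). Every state reaches
  the empty state by moves of positive rate, whose reverses also have positive rate. Hence for a
  stationary \<pi> the ratio \<pi>/weight is harmonic for the generator, constant by the maximum
  principle, and \<pi> is the normalised weight. Summing over the compositions of x, the
  multinomial theorem produces \<rho>^x/x!.\<close>

section \<open>Stationary distributions of reversible chains\<close>

lemma stationary_ratio_harmonic:
  assumes pos: "\<forall>w\<in>S. p w > 0"
    and balance: "\<forall>w\<in>S. \<forall>w'\<in>S. p w * Q w w' = p w' * Q w' w"
    and st: "stationary S Q \<pi>" and w: "w \<in> S"
  shows "\<pi> w / p w * (\<Sum>w'\<in>S - {w}. Q w w') = (\<Sum>w'\<in>S - {w}. \<pi> w' / p w' * Q w w')"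
proof -
  have pw: "p w \<noteq> 0" using pos w by force
  have "p w * (\<pi> w / p w * (\<Sum>w'\<in>S - {w}. Q w w')) = \<pi> w * (\<Sum>w'\<in>S - {w}. Q w w')"
    using pw by simp
  also have "\<dots> = (\<Sum>w'\<in>S - {w}. \<pi> w' * Q w' w)"
    using st w unfolding stationary_def by blast
  also have "\<dots> = (\<Sum>w'\<in>S - {w}. p w * (\<pi> w' / p w' * Q w w'))"
  proof (rule sum.cong[OF refl])
    fix w' assume w': "w' \<in> S - {w}"
    then have "p w' \<noteq> 0" using pos by force
    then have "\<pi> w' * Q w' w = \<pi> w' / p w' * (p w' * Q w' w)" by simp
    also have "\<dots> = p w * (\<pi> w' / p w' * Q w w')" using balance w w' by auto
    finally show "\<pi> w' * Q w' w = p w * (\<pi> w' / p w' * Q w w')" .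
  qed
  also have "\<dots> = p w * (\<Sum>w'\<in>S - {w}. \<pi> w' / p w' * Q w w')"
    by (simp add: sum_distrib_left)
  finally show ?thesis using pw by simp
qed

lemma harmonic_maximum_spreads:
  fixes h :: "'s \<Rightarrow> real"
  assumes "finite S" "w \<in> S" "w' \<in> S" "w' \<noteq> w"
    and nonneg: "\<forall>y\<in>S - {w}. Q w y \<ge> 0"
    and max: "\<forall>y\<in>S. h y \<le> h w"
    and harmonic: "h w * (\<Sum>y\<in>S - {w}. Q w y) = (\<Sum>y\<in>S - {w}. h y * Q w y)"
    and "Q w w' > 0"
  shows "h w' = h w"
proof -
  have "(\<Sum>y\<in>S - {w}. (h w - h y) * Q w y) = 0"
    using harmonic by (simp add: algebra_simps sum_subtractf sum_distrib_left)
  moreover have "\<forall>y\<in>S - {w}. 0 \<le> (h w - h y) * Q w y"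
    using max nonneg by auto
  ultimately have "\<forall>y\<in>S - {w}. (h w - h y) * Q w y = 0"
    using \<open>finite S\<close> sum_nonneg_eq_0_iff[of "S - {w}" "\<lambda>y. (h w - h y) * Q w y"] by blast
  then have "(h w - h w') * Q w w' = 0" using assms(3,4) by blast
  then show ?thesis using \<open>Q w w' > 0\<close> by simp
qed

lemma harmonic_const_of_descent:
  fixes h :: "'s \<Rightarrow> real" and f :: "'s \<Rightarrow> nat"
  assumes fin: "finite S" and z: "z \<in> S"
    and nonneg: "\<forall>w\<in>S. \<forall>w'\<in>S. w \<noteq> w' \<longrightarrow> Q w w' \<ge> 0"
    and reverse: "\<forall>w\<in>S. \<forall>w'\<in>S. Q w w' > 0 \<longrightarrow> Q w' w > 0"
    and descent: "\<forall>w\<in>S. w \<noteq> z \<longrightarrow> (\<exists>w'\<in>S. f w' < f w \<and> Q w w' > 0)"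
    and harmonic: "\<forall>w\<in>S. h w * (\<Sum>w'\<in>S - {w}. Q w w') = (\<Sum>w'\<in>S - {w}. h w' * Q w w')"
    and w: "w \<in> S"
  shows "h w = Max (h ` S)"
proof -
  define M where "M = Max (h ` S)"
  have le_M: "\<forall>y\<in>S. h y \<le> M" using fin by (simp add: M_def)
  have spread: "h w' = M" if "w \<in> S" "w' \<in> S" "w' \<noteq> w" "h w = M" "Q w w' > 0" for w w'
  proof -
    have "h w' = h w"
      by (rule harmonic_maximum_spreads[OF fin]) (use that nonneg harmonic le_M in auto)
    with that show ?thesis by simp
  qed
  have linked: "h w = M \<longleftrightarrow> h z = M" if "w \<in> S" for w
    using that
  proof (induction "f w" arbitrary: w rule: less_induct)
    case less
    show ?case
    proof (cases "w = z")
      case False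
      then obtain w' where w': "w' \<in> S" "f w' < f w" "Q w w' > 0"
        using descent less.prems by blast
      then have "w' \<noteq> w" by auto
      then have "h w = M \<longleftrightarrow> h w' = M"
        using spread[of w w'] spread[of w' w] w' reverse less.prems by auto
      then show ?thesis using less.hyps w' by blast
    qed simp
  qed
  have "M \<in> h ` S" unfolding M_def using fin z by (intro Max_in) auto
  then have "h z = M" using linked by blast
  then show ?thesis using linked[OF w] M_def by simp
qed

theorem stationary_unique_of_reversible:
  fixes f :: "'s \<Rightarrow> nat"
  assumes fin: "finite S" and z: "z \<in> S"
    and pos: "\<forall>w\<in>S. p w > 0"
    and nonneg: "\<forall>w\<in>S. \<forall>w'\<in>S. w \<noteq> w' \<longrightarrow> Q w w' \<ge> 0"
    and balance: "\<forall>w\<in>S. \<forall>w'\<in>S. p w * Q w w' = p w' * Q w' w"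
    and descent: "\<forall>w\<in>S. w \<noteq> z \<longrightarrow> (\<exists>w'\<in>S. f w' < f w \<and> Q w w' > 0)"
    and st: "stationary S Q \<pi>" and w: "w \<in> S"
  shows "\<pi> w = p w / (\<Sum>w\<in>S. p w)"
proof -
  define c where "c = Max ((\<lambda>w. \<pi> w / p w) ` S)"
  have reverse: "\<forall>w\<in>S. \<forall>w'\<in>S. Q w w' > 0 \<longrightarrow> Q w' w > 0"
    using balance pos by (metis mult_pos_pos zero_less_mult_pos)
  have harmonic: "\<forall>w\<in>S. \<pi> w / p w * (\<Sum>w'\<in>S - {w}. Q w w') = (\<Sum>w'\<in>S - {w}. \<pi> w' / p w' * Q w w')"
    using stationary_ratio_harmonic[OF pos balance st] by blast
  have "\<pi> y / p y = c" if "y \<in> S" for y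
    unfolding c_def
    by (rule harmonic_const_of_descent[where h = "\<lambda>w. \<pi> w / p w", OF fin z nonneg reverse descent harmonic that])
  then have \<pi>_eq: "\<pi> y = c * p y" if "y \<in> S" for y
    using that pos by (metis less_irrefl nonzero_eq_divide_eq)
  have "1 = (\<Sum>y\<in>S. \<pi> y)" using st unfolding stationary_def by simp
  also have "\<dots> = c * (\<Sum>y\<in>S. p y)" by (simp add: sum_distrib_left \<pi>_eq)
  finally have "c = 1 / (\<Sum>y\<in>S. p y)" by (auto simp: eq_divide_eq)
  then show ?thesis using \<pi>_eq w by simp
qed

section \<open>Product-form weights\<close>

lemma prod_fun_upd:
  fixes g :: "'i \<Rightarrow> 'b \<Rightarrow> 'c::comm_monoid_mult"
  assumes "finite A" "j \<in> A"
  shows "(\<Prod>l\<in>A. g l ((a(j := y)) l)) = g j y * (\<Prod>l\<in>A - {j}. g l (a l))"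
proof -
  have "(\<Prod>l\<in>A - {j}. g l ((a(j := y)) l)) = (\<Prod>l\<in>A - {j}. g l (a l))"
    by (rule prod.cong) auto
  then show ?thesis by (simp add: prod.remove[OF assms])
qed

lemma sum_fun_upd:
  fixes g :: "'i \<Rightarrow> 'b \<Rightarrow> 'c::comm_monoid_add"
  assumes "finite A" "j \<in> A"
  shows "(\<Sum>l\<in>A. g l ((a(j := y)) l)) = g j y + (\<Sum>l\<in>A - {j}. g l (a l))"
proof -
  have "(\<Sum>l\<in>A - {j}. g l ((a(j := y)) l)) = (\<Sum>l\<in>A - {j}. g l (a l))"
    by (rule sum.cong) auto
  then show ?thesis by (simp add: sum.remove[OF assms])
qed

lemma busy_p_eq_sum: "busy_p n a = (\<Sum>j<n. if a j = T then 1 else 0)"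
proof -
  have "{j. j < n \<and> a j = T} = {..<n} \<inter> {j. a j = T}" by auto
  then show ?thesis unfolding busy_p_def by (simp add: sum.If_cases)
qed

lemma busy_p_fun_upd:
  assumes "j < n"
  shows "busy_p n (a(j := y)) + (if a j = T then 1 else 0) = busy_p n a + (if y = T then 1 else 0)"
  using sum_fun_upd[of "{..<n}" j "\<lambda>_ s. if s = T then 1 else 0 :: nat" a y]
    sum_fun_upd[of "{..<n}" j "\<lambda>_ s. if s = T then 1 else 0 :: nat" a "a j"] assms
  unfolding busy_p_eq_sum by simp

definition act_weight :: "(nat \<Rightarrow> real) \<Rightarrow> (nat \<Rightarrow> real) \<Rightarrow> (nat \<Rightarrow> real) \<Rightarrow> (nat \<Rightarrow> real)
    \<Rightarrow> nat \<Rightarrow> act \<Rightarrow> real" where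
  "act_weight \<alpha> \<beta> u v j s =
     (case s of I \<Rightarrow> 1 | W \<Rightarrow> \<alpha> j / \<beta> j | T \<Rightarrow> \<alpha> j * u j / (\<beta> j * v j))"

lemma pweight_eq_prod_act_weight: "pweight n \<alpha> \<beta> u v a = (\<Prod>j<n. act_weight \<alpha> \<beta> u v j (a j))"
  unfolding pweight_def act_weight_def by (rule prod.cong) (auto split: act.split)

lemma pweight_fun_upd:
  assumes "j < n"
  shows "pweight n \<alpha> \<beta> u v (a(j := y)) * act_weight \<alpha> \<beta> u v j (a j)
       = pweight n \<alpha> \<beta> u v a * act_weight \<alpha> \<beta> u v j y"
  using prod_fun_upd[of "{..<n}" j "act_weight \<alpha> \<beta> u v" a y]
    prod_fun_upd[of "{..<n}" j "act_weight \<alpha> \<beta> u v" a "a j"] assms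
  unfolding pweight_eq_prod_act_weight by (simp add: mult_ac)

text \<open>Here c counts the channels held by non-persistent users.\<close>

definition pweight_busy :: "nat \<Rightarrow> (nat \<Rightarrow> real) \<Rightarrow> (nat \<Rightarrow> real) \<Rightarrow> (nat \<Rightarrow> real) \<Rightarrow> (nat \<Rightarrow> real)
    \<Rightarrow> (nat \<Rightarrow> real) \<Rightarrow> nat \<Rightarrow> (nat \<Rightarrow> act) \<Rightarrow> real" where
  "pweight_busy n \<alpha> \<beta> u v \<theta> c a = (\<Prod>r<c + busy_p n a. \<theta> r) * pweight n \<alpha> \<beta> u v a"

lemma weight_eq_pweight_busy:
  "weight k n lam \<mu> \<alpha> \<beta> u v \<theta> (x, a)
     = (\<Prod>i<k. (lam i / \<mu> i) ^ x i / fact (x i)) * pweight_busy n \<alpha> \<beta> u v \<theta> (\<Sum>i<k. x i) a"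
  unfolding weight_def pweight_busy_def busy_def by (simp add: mult_ac)

section \<open>Finiteness and the multinomial sum\<close>

lemma UNIV_act: "UNIV = {I, W, T}"
  using act.exhaust by blast

lemma finite_pstates: "finite (pstates m n)"
proof (rule finite_subset)
  show "pstates m n \<subseteq> {a. \<forall>j. (j \<in> {..<n} \<longrightarrow> a j \<in> UNIV) \<and> (j \<notin> {..<n} \<longrightarrow> a j = I)}"
    unfolding pstates_def by auto
  show "finite \<dots>" by (rule finite_set_of_finite_funs) (simp_all add: UNIV_act)
qed

lemma component_le_sum:
  fixes x :: "nat \<Rightarrow> nat"
  assumes "\<forall>i\<ge>k. x i = 0"
  shows "x i \<le> (\<Sum>l<k. x l)"
proof (cases "i < k")
  case True
  then show ?thesis by (auto intro: member_le_sum)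
qed (use assms in simp)

lemma finite_states: "finite (states m k n)"
proof (rule finite_subset)
  show "states m k n \<subseteq> {x. \<forall>i. (i \<in> {..<k} \<longrightarrow> x i \<in> {..m}) \<and> (i \<notin> {..<k} \<longrightarrow> x i = 0)}
      \<times> {a. \<forall>j. (j \<in> {..<n} \<longrightarrow> a j \<in> UNIV) \<and> (j \<notin> {..<n} \<longrightarrow> a j = I)}"
  proof (clarsimp simp: states_def busy_def)
    fix x a i
    assume x: "\<forall>i\<ge>k. x i = 0" and "(\<Sum>i<k. x i) + busy_p n a \<le> m"
    then show "x i \<le> m" using component_le_sum[OF x, of i] by linarith
  qed
  show "finite \<dots>"
    by (intro finite_cartesian_product finite_set_of_finite_funs) (simp_all add: UNIV_act)
qed

definition compositions :: "nat \<Rightarrow> nat \<Rightarrow> (nat \<Rightarrow> nat) set" where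
  "compositions k N = {x. (\<forall>i\<ge>k. x i = 0) \<and> (\<Sum>i<k. x i) = N}"

lemma finite_compositions: "finite (compositions k N)"
proof (rule finite_subset)
  show "compositions k N \<subseteq> {x. \<forall>i. (i \<in> {..<k} \<longrightarrow> x i \<in> {..N}) \<and> (i \<notin> {..<k} \<longrightarrow> x i = 0)}"
    unfolding compositions_def using component_le_sum by auto
  show "finite \<dots>" by (rule finite_set_of_finite_funs) simp_all
qed

lemma compositions_Suc_bij:
  "bij_betw (\<lambda>x. (x k, x(k := 0))) (compositions (Suc k) N) (SIGMA j:{..N}. compositions k (N - j))"
proof (rule bij_betw_byWitness[where f' = "\<lambda>(j, y). y(k := j)"])
  have sum_upd: "(\<Sum>i<k. (x(k := j)) i) = (\<Sum>i<k. x i)" for x :: "nat \<Rightarrow> nat" and j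
    by (rule sum.cong) auto
  show "(\<lambda>x. (x k, x(k := 0))) ` compositions (Suc k) N \<subseteq> (SIGMA j:{..N}. compositions k (N - j))"
    unfolding compositions_def using sum_upd by auto
  show "(\<lambda>(j, y). y(k := j)) ` (SIGMA j:{..N}. compositions k (N - j)) \<subseteq> compositions (Suc k) N"
    unfolding compositions_def using sum_upd by auto
  show "\<forall>p\<in>SIGMA j:{..N}. compositions k (N - j). (\<lambda>x. (x k, x(k := 0))) (case p of (j, y) \<Rightarrow> y(k := j)) = p"
    unfolding compositions_def by auto
qed simp

lemma sum_compositions_multinomial:
  fixes \<rho> :: "nat \<Rightarrow> 'a::field_char_0"
  shows "(\<Sum>x\<in>compositions k N. \<Prod>i<k. \<rho> i ^ x i / fact (x i)) = (\<Sum>i<k. \<rho> i) ^ N / fact N"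
proof (induction k arbitrary: N)
  case 0
  have "compositions 0 N = (if N = 0 then {\<lambda>_. 0} else {})"
    unfolding compositions_def by auto
  then show ?case by simp
next
  case (Suc k)
  let ?G = "\<lambda>x. \<Prod>i<k. \<rho> i ^ x i / fact (x i)"
  have G_upd: "?G (x(k := j)) = ?G x" for x j by (rule prod.cong) auto
  have "(\<Sum>x\<in>compositions (Suc k) N. \<Prod>i<Suc k. \<rho> i ^ x i / fact (x i))
      = (\<Sum>(j, y)\<in>(SIGMA j:{..N}. compositions k (N - j)). \<rho> k ^ j / fact j * ?G y)"
  proof -
    have "(\<Sum>x\<in>compositions (Suc k) N. \<Prod>i<Suc k. \<rho> i ^ x i / fact (x i))
        = (\<Sum>x\<in>compositions (Suc k) N. (\<lambda>(j, y). \<rho> k ^ j / fact j * ?G y) (x k, x(k := 0)))"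
      by (simp add: G_upd mult.commute)
    also have "\<dots> = (\<Sum>(j, y)\<in>(SIGMA j:{..N}. compositions k (N - j)). \<rho> k ^ j / fact j * ?G y)"
      by (rule sum.reindex_bij_betw[OF compositions_Suc_bij])
    finally show ?thesis .
  qed
  also have "\<dots> = (\<Sum>j\<le>N. \<rho> k ^ j / fact j * (\<Sum>y\<in>compositions k (N - j). ?G y))"
    by (subst sum.Sigma[symmetric]) (auto simp: finite_compositions sum_distrib_left)
  also have "\<dots> = (\<Sum>j\<le>N. of_nat (N choose j) * \<rho> k ^ j * (\<Sum>i<k. \<rho> i) ^ (N - j)) / fact N"
    unfolding Suc.IH sum_divide_distrib
    by (rule sum.cong) (simp_all add: binomial_fact field_simps)
  also have "\<dots> = (\<Sum>i<Suc k. \<rho> i) ^ N / fact N"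
    by (simp add: binomial_ring add.commute)
  finally show ?case .
qed

lemma sum_weight_occupancy:
  assumes "a \<in> pstates m n" "x + busy_p n a \<le> m"
  shows "(\<Sum>w\<in>{w \<in> states m k n. (\<Sum>i<k. fst w i) = x \<and> snd w = a}. weight k n lam \<mu> \<alpha> \<beta> u v \<theta> w)
       = pweight_busy n \<alpha> \<beta> u v \<theta> x a * (\<Sum>i<k. lam i / \<mu> i) ^ x / fact x"
proof -
  have "{w \<in> states m k n. (\<Sum>i<k. fst w i) = x \<and> snd w = a} = (\<lambda>y. (y, a)) ` compositions k x"
    using assms unfolding states_def pstates_def compositions_def busy_def by auto
  then have "(\<Sum>w\<in>{w \<in> states m k n. (\<Sum>i<k. fst w i) = x \<and> snd w = a}. weight k n lam \<mu> \<alpha> \<beta> u v \<theta> w)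
      = (\<Sum>y\<in>compositions k x. weight k n lam \<mu> \<alpha> \<beta> u v \<theta> (y, a))"
    by (simp add: sum.reindex inj_on_def)
  also have "\<dots> = (\<Sum>y\<in>compositions k x. \<Prod>i<k. (lam i / \<mu> i) ^ y i / fact (y i)) * pweight_busy n \<alpha> \<beta> u v \<theta> x a"
    unfolding sum_distrib_right
    by (rule sum.cong) (simp_all add: weight_eq_pweight_busy compositions_def)
  finally show ?thesis by (simp add: sum_compositions_multinomial)
qed

section \<open>Detailed balance and accessibility of the empty state\<close>

fun act_level :: "act \<Rightarrow> nat" where
  "act_level I = 0" | "act_level W = 1" | "act_level T = 2"

definition state_level :: "nat \<Rightarrow> nat \<Rightarrow> state \<Rightarrow> nat" where
  "state_level k n w = (\<Sum>i<k. fst w i) + (\<Sum>j<n. act_level (snd w j))"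

context
  fixes n :: nat and \<alpha> \<beta> u v \<theta> :: "nat \<Rightarrow> real"
  assumes user_pos: "\<forall>j<n. \<alpha> j > 0 \<and> \<beta> j > 0 \<and> u j > 0 \<and> v j > 0"
begin

lemma idle_wait_balance:
  assumes j: "j < n"
  shows "pweight_busy n \<alpha> \<beta> u v \<theta> c a * (if a j = I \<and> a' = a(j := W) then \<alpha> j else 0)
       = pweight_busy n \<alpha> \<beta> u v \<theta> c a' * (if a' j = W \<and> a = a'(j := I) then \<beta> j else 0)"
proof (cases "a j = I \<and> a' = a(j := W)")
  case True
  then have reverse: "a' j = W \<and> a = a'(j := I)" by auto
  have "busy_p n a' = busy_p n a"
    using busy_p_fun_upd[OF j, of a W] True by simp
  moreover have "pweight n \<alpha> \<beta> u v a' = pweight n \<alpha> \<beta> u v a * (\<alpha> j / \<beta> j)"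
    using pweight_fun_upd[OF j, of \<alpha> \<beta> u v a W] True by (simp add: act_weight_def)
  moreover have "\<beta> j > 0" using user_pos j by auto
  ultimately show ?thesis unfolding pweight_busy_def if_P[OF True] if_P[OF reverse] by simp
next
  case False
  then have no_reverse: "\<not> (a' j = W \<and> a = a'(j := I))" by auto
  show ?thesis unfolding if_not_P[OF False] if_not_P[OF no_reverse] by simp
qed

lemma wait_transmit_balance:
  assumes j: "j < n"
  shows "pweight_busy n \<alpha> \<beta> u v \<theta> c a * (if a j = W \<and> a' = a(j := T) then u j * \<theta> (c + busy_p n a) else 0)
       = pweight_busy n \<alpha> \<beta> u v \<theta> c a' * (if a' j = T \<and> a = a'(j := W) then v j else 0)"
proof (cases "a j = W \<and> a' = a(j := T)")
  case True
  then have reverse: "a' j = T \<and> a = a'(j := W)" by auto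
  have "busy_p n a' = Suc (busy_p n a)"
    using busy_p_fun_upd[OF j, of a T] True by simp
  have pos: "\<alpha> j > 0" "\<beta> j > 0" "v j > 0" using user_pos j by auto
  have "pweight n \<alpha> \<beta> u v a' * (\<alpha> j / \<beta> j) = pweight n \<alpha> \<beta> u v a * (u j / v j) * (\<alpha> j / \<beta> j)"
    using pweight_fun_upd[OF j, of \<alpha> \<beta> u v a T] True by (simp add: act_weight_def field_simps)
  moreover have "\<alpha> j / \<beta> j \<noteq> 0" using pos by simp
  ultimately have "pweight n \<alpha> \<beta> u v a' = pweight n \<alpha> \<beta> u v a * (u j / v j)"
    using mult_right_cancel by blast
  then show ?thesis
    using \<open>busy_p n a' = Suc (busy_p n a)\<close> pos
    unfolding pweight_busy_def if_P[OF True] if_P[OF reverse] by simp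
next
  case False
  then have no_reverse: "\<not> (a' j = T \<and> a = a'(j := W))" by auto
  show ?thesis unfolding if_not_P[OF False] if_not_P[OF no_reverse] by simp
qed

lemma prate_balance:
  "pweight_busy n \<alpha> \<beta> u v \<theta> c a * prate n \<alpha> \<beta> u v (\<theta> (c + busy_p n a)) a a'
 = pweight_busy n \<alpha> \<beta> u v \<theta> c a' * prate n \<alpha> \<beta> u v (\<theta> (c + busy_p n a')) a' a"
  unfolding prate_def sum_distrib_left
proof (rule sum.cong[OF refl])
  fix j assume "j \<in> {..<n}"
  then have j: "j < n" by simp
  show "pweight_busy n \<alpha> \<beta> u v \<theta> c a *
         ((if a j = I \<and> a' = a(j := W) then \<alpha> j else 0) +
          (if a j = W \<and> a' = a(j := I) then \<beta> j else 0) +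
          (if a j = W \<and> a' = a(j := T) then u j * \<theta> (c + busy_p n a) else 0) +
          (if a j = T \<and> a' = a(j := W) then v j else 0)) =
        pweight_busy n \<alpha> \<beta> u v \<theta> c a' *
         ((if a' j = I \<and> a = a'(j := W) then \<alpha> j else 0) +
          (if a' j = W \<and> a = a'(j := I) then \<beta> j else 0) +
          (if a' j = W \<and> a = a'(j := T) then u j * \<theta> (c + busy_p n a') else 0) +
          (if a' j = T \<and> a = a'(j := W) then v j else 0))"
    using idle_wait_balance[OF j, of c a a'] idle_wait_balance[OF j, of c a' a]
      wait_transmit_balance[OF j, of c a a'] wait_transmit_balance[OF j, of c a' a]
    by (simp only: distrib_left)
qed

lemma prate_nonneg:
  assumes "0 \<le> thb"
  shows "0 \<le> prate n \<alpha> \<beta> u v thb a a'"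
  unfolding prate_def by (intro sum_nonneg) (use assms user_pos in auto)

lemma prate_pos_of_step:
  assumes j: "j < n" and thb: "0 \<le> thb"
    and step: "(a j = W \<and> a' = a(j := I)) \<or> (a j = T \<and> a' = a(j := W))"
  shows "0 < prate n \<alpha> \<beta> u v thb a a'"
proof -
  define s where "s l = (if a l = I \<and> a' = a(l := W) then \<alpha> l else 0)
    + (if a l = W \<and> a' = a(l := I) then \<beta> l else 0)
    + (if a l = W \<and> a' = a(l := T) then u l * thb else 0)
    + (if a l = T \<and> a' = a(l := W) then v l else 0)" for l
  have nonneg: "0 \<le> s l" if "l < n" for l
    using user_pos that thb unfolding s_def by auto
  have "0 < s j" using step user_pos j thb unfolding s_def by (auto dest: fun_upd_eqD)
  also have "s j \<le> (\<Sum>l<n. s l)" by (rule member_le_sum) (use j nonneg in auto)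
  also have "\<dots> = prate n \<alpha> \<beta> u v thb a a'" unfolding prate_def s_def ..
  finally show ?thesis .
qed

lemma prate_descent:
  assumes j: "j < n" and "a j \<noteq> I" and thb: "0 \<le> thb"
  obtains a' where "\<forall>l. l \<noteq> j \<longrightarrow> a' l = a l" "busy_p n a' \<le> busy_p n a"
    "(\<Sum>l<n. act_level (a' l)) < (\<Sum>l<n. act_level (a l))" "0 < prate n \<alpha> \<beta> u v thb a a'"
proof -
  define s where "s = (if a j = W then I else W)"
  have s: "(a j = W \<and> s = I) \<or> (a j = T \<and> s = W)"
    using \<open>a j \<noteq> I\<close> unfolding s_def by (cases "a j") auto
  have "busy_p n (a(j := s)) \<le> busy_p n a"
    using busy_p_fun_upd[OF j, of a s] s by auto
  moreover have "(\<Sum>l<n. act_level ((a(j := s)) l)) < (\<Sum>l<n. act_level (a l))"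
    using sum_fun_upd[of "{..<n}" j "\<lambda>_. act_level" a s]
      sum_fun_upd[of "{..<n}" j "\<lambda>_. act_level" a "a j"] j s by auto
  moreover have "0 < prate n \<alpha> \<beta> u v thb a (a(j := s))"
    by (rule prate_pos_of_step[OF j thb]) (use s in auto)
  ultimately show ?thesis using that[of "a(j := s)"] by auto
qed

lemma pweight_pos: "0 < pweight n \<alpha> \<beta> u v a"
  unfolding pweight_def by (rule prod_pos) (use user_pos in auto)

lemma pweight_busy_pos:
  assumes "\<forall>b<m. 0 < \<theta> b" and "c + busy_p n a \<le> m"
  shows "0 < pweight_busy n \<alpha> \<beta> u v \<theta> c a"
proof -
  have "0 < (\<Prod>r<c + busy_p n a. \<theta> r)" by (rule prod_pos) (use assms in auto)
  then show ?thesis unfolding pweight_busy_def using pweight_pos by simp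
qed

context
  fixes k :: nat and lam \<mu> :: "nat \<Rightarrow> real"
  assumes class_pos: "\<forall>i<k. lam i > 0 \<and> \<mu> i > 0"
begin

lemma arrival_departure_balance:
  assumes i: "i < k"
  shows "weight k n lam \<mu> \<alpha> \<beta> u v \<theta> (x, a)
           * (if a' = a \<and> x' = x(i := x i + 1) then lam i * \<theta> (busy k n (x, a)) else 0)
       = weight k n lam \<mu> \<alpha> \<beta> u v \<theta> (x', a')
           * (if a = a' \<and> x' = x(i := x i + 1) then real (x i + 1) * \<mu> i else 0)"
proof (cases "a' = a \<and> x' = x(i := x i + 1)")
  case True
  then have reverse: "a = a' \<and> x' = x(i := x i + 1)" by auto
  define g where "g l y = (lam l / \<mu> l) ^ y / fact y" for l y
  define R where "R = (\<Prod>l\<in>{..<k} - {i}. g l (x l))"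
  define s where "s = (\<Sum>l<k. x l)"
  have "(\<Sum>l<k. x' l) = Suc s"
    using sum_fun_upd[of "{..<k}" i "\<lambda>_ y. y" x "x i + 1"] sum_fun_upd[of "{..<k}" i "\<lambda>_ y. y" x "x i"]
      i True by (simp add: s_def)
  then have weight': "weight k n lam \<mu> \<alpha> \<beta> u v \<theta> (x', a')
      = g i (x i + 1) * R * (pweight_busy n \<alpha> \<beta> u v \<theta> s a * \<theta> (s + busy_p n a))"
    using prod_fun_upd[of "{..<k}" i g x "x i + 1"] i True
    by (simp add: weight_eq_pweight_busy pweight_busy_def g_def R_def)
  have weight: "weight k n lam \<mu> \<alpha> \<beta> u v \<theta> (x, a) = g i (x i) * R * pweight_busy n \<alpha> \<beta> u v \<theta> s a"
    using prod_fun_upd[of "{..<k}" i g x "x i"] i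
    by (simp add: weight_eq_pweight_busy g_def R_def s_def)
  have "g i (x i + 1) * (real (x i + 1) * \<mu> i) = g i (x i) * (lam i / \<mu> i * \<mu> i)"
    unfolding g_def by (simp add: field_simps del: of_nat_Suc)
  moreover have "\<mu> i \<noteq> 0" using class_pos i by auto
  ultimately have g_Suc: "g i (x i + 1) * (real (x i + 1) * \<mu> i) = g i (x i) * lam i"
    by simp
  have busy: "busy k n (x, a) = s + busy_p n a" unfolding busy_def s_def by simp
  have "weight k n lam \<mu> \<alpha> \<beta> u v \<theta> (x', a') * (real (x i + 1) * \<mu> i)
      = R * pweight_busy n \<alpha> \<beta> u v \<theta> s a * \<theta> (s + busy_p n a) * (g i (x i + 1) * (real (x i + 1) * \<mu> i))"
    unfolding weight' by (simp only: mult_ac)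
  also have "\<dots> = weight k n lam \<mu> \<alpha> \<beta> u v \<theta> (x, a) * (lam i * \<theta> (busy k n (x, a)))"
    unfolding g_Suc weight busy by (simp only: mult_ac)
  finally show ?thesis unfolding if_P[OF True] if_P[OF reverse] by simp
next
  case False
  then have no_reverse: "\<not> (a = a' \<and> x' = x(i := x i + 1))" by auto
  show ?thesis unfolding if_not_P[OF False] if_not_P[OF no_reverse] by simp
qed

lemma rate_balance:
  "weight k n lam \<mu> \<alpha> \<beta> u v \<theta> w * rate k n lam \<mu> \<alpha> \<beta> u v \<theta> w w'
 = weight k n lam \<mu> \<alpha> \<beta> u v \<theta> w' * rate k n lam \<mu> \<alpha> \<beta> u v \<theta> w' w"
proof -
  obtain x a where w: "w = (x, a)" by force
  obtain x' a' where w': "w' = (x', a')" by force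
  let ?weight = "weight k n lam \<mu> \<alpha> \<beta> u v \<theta>"
  have classes: "?weight (x, a) * (\<Sum>i<k.
        (if a' = a \<and> x' = x(i := x i + 1) then lam i * \<theta> (busy k n (x, a)) else 0)
      + (if a' = a \<and> x = x'(i := x' i + 1) then real (x' i + 1) * \<mu> i else 0))
    = ?weight (x', a') * (\<Sum>i<k.
        (if a = a' \<and> x = x'(i := x' i + 1) then lam i * \<theta> (busy k n (x', a')) else 0)
      + (if a = a' \<and> x' = x(i := x i + 1) then real (x i + 1) * \<mu> i else 0))"
    unfolding sum_distrib_left
  proof (rule sum.cong[OF refl])
    fix i assume "i \<in> {..<k}"
    then have i: "i < k" by simp
    show "?weight (x, a) * ((if a' = a \<and> x' = x(i := x i + 1) then lam i * \<theta> (busy k n (x, a)) else 0)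
          + (if a' = a \<and> x = x'(i := x' i + 1) then real (x' i + 1) * \<mu> i else 0))
        = ?weight (x', a') * ((if a = a' \<and> x = x'(i := x' i + 1) then lam i * \<theta> (busy k n (x', a')) else 0)
          + (if a = a' \<and> x' = x(i := x i + 1) then real (x i + 1) * \<mu> i else 0))"
      using arrival_departure_balance[OF i, of x a a' x'] arrival_departure_balance[OF i, of x' a' a x]
      by (simp only: distrib_left add.commute)
  qed
  have persistent: "?weight (x, a) * (if x' = x then prate n \<alpha> \<beta> u v (\<theta> (busy k n (x, a))) a a' else 0)
    = ?weight (x', a') * (if x = x' then prate n \<alpha> \<beta> u v (\<theta> (busy k n (x', a'))) a' a else 0)"
    using prate_balance[of "\<Sum>i<k. x i" a a']
    by (auto simp: weight_eq_pweight_busy busy_def mult_ac)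
  show ?thesis unfolding w w' rate_def Let_def fst_conv snd_conv
    using classes persistent by (simp add: distrib_left eq_commute)
qed

lemma rate_nonneg:
  assumes "0 \<le> \<theta> (busy k n w)"
  shows "0 \<le> rate k n lam \<mu> \<alpha> \<beta> u v \<theta> w w'"
  unfolding rate_def Let_def
  using prate_nonneg[OF assms] assms class_pos
  by (auto intro!: add_nonneg_nonneg sum_nonneg)

lemma rate_departure_pos:
  assumes i: "i < k" and "0 < x i" and thb: "0 \<le> \<theta> (busy k n (x, a))"
  shows "0 < rate k n lam \<mu> \<alpha> \<beta> u v \<theta> (x, a) (x(i := x i - 1), a)"
proof -
  let ?x' = "x(i := x i - 1)"
  define t where "t l = (if a = a \<and> ?x' = x(l := x l + 1) then lam l * \<theta> (busy k n (x, a)) else 0)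
    + (if a = a \<and> x = ?x'(l := ?x' l + 1) then real (?x' l + 1) * \<mu> l else 0)" for l
  have nonneg: "0 \<le> t l" if "l < k" for l
    using class_pos that thb unfolding t_def by auto
  have "?x'(i := ?x' i + 1) = x" using \<open>0 < x i\<close> by auto
  then have "0 < t i" using class_pos i thb unfolding t_def by (auto dest: fun_upd_eqD)
  also have "t i \<le> (\<Sum>l<k. t l)" by (rule member_le_sum) (use i nonneg in auto)
  also have "\<dots> \<le> rate k n lam \<mu> \<alpha> \<beta> u v \<theta> (x, a) (?x', a)"
    unfolding rate_def Let_def t_def fst_conv snd_conv using prate_nonneg[OF thb] by simp
  finally show ?thesis .
qed

lemma rate_persistent_pos:
  assumes thb: "0 \<le> \<theta> (busy k n (x, a))"
    and "0 < prate n \<alpha> \<beta> u v (\<theta> (busy k n (x, a))) a a'"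
  shows "0 < rate k n lam \<mu> \<alpha> \<beta> u v \<theta> (x, a) (x, a')"
  unfolding rate_def Let_def fst_conv snd_conv
  using assms class_pos by (auto intro!: add_nonneg_pos sum_nonneg)

lemma weight_pos:
  assumes "\<forall>b<m. 0 < \<theta> b" and "w \<in> states m k n"
  shows "0 < weight k n lam \<mu> \<alpha> \<beta> u v \<theta> w"
proof -
  obtain x a where w: "w = (x, a)" by force
  have "0 < (\<Prod>i<k. (lam i / \<mu> i) ^ x i / fact (x i))"
    by (rule prod_pos) (use class_pos in auto)
  moreover have "0 < pweight_busy n \<alpha> \<beta> u v \<theta> (\<Sum>i<k. x i) a"
    using pweight_busy_pos assms w unfolding states_def busy_def by auto
  ultimately show ?thesis unfolding w weight_eq_pweight_busy by simp
qed

lemma states_descent: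
  assumes \<theta>_nonneg: "\<forall>b\<le>m. 0 \<le> \<theta> b" and w: "w \<in> states m k n" and "w \<noteq> (\<lambda>_. 0, \<lambda>_. I)"
  shows "\<exists>w'\<in>states m k n. state_level k n w' < state_level k n w \<and> 0 < rate k n lam \<mu> \<alpha> \<beta> u v \<theta> w w'"
proof -
  obtain x a where xa: "w = (x, a)" by force
  have x0: "\<forall>i\<ge>k. x i = 0" and a0: "\<forall>j\<ge>n. a j = I" and bw: "(\<Sum>i<k. x i) + busy_p n a \<le> m"
    using w unfolding xa states_def busy_def by auto
  have thb: "0 \<le> \<theta> (busy k n (x, a))" using \<theta>_nonneg bw unfolding busy_def by simp
  show ?thesis
  proof (cases "\<exists>i. x i \<noteq> 0")
    case True
    then obtain i where "x i \<noteq> 0" by blast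
    with x0 have i: "i < k" by (meson not_le)
    have "(\<Sum>l<k. (x(i := x i - 1)) l) < (\<Sum>l<k. x l)"
      using sum_fun_upd[of "{..<k}" i "\<lambda>_ y. y" x "x i - 1"] sum_fun_upd[of "{..<k}" i "\<lambda>_ y. y" x "x i"]
        i \<open>x i \<noteq> 0\<close> by simp
    moreover have "\<forall>l\<ge>k. (x(i := x i - 1)) l = 0" using x0 i by simp
    ultimately have "(x(i := x i - 1), a) \<in> states m k n"
      and "state_level k n (x(i := x i - 1), a) < state_level k n w"
      using a0 bw unfolding xa states_def busy_def state_level_def by simp_all
    moreover have "0 < rate k n lam \<mu> \<alpha> \<beta> u v \<theta> w (x(i := x i - 1), a)"
      unfolding xa using rate_departure_pos[OF i _ thb] \<open>x i \<noteq> 0\<close> by simp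
    ultimately show ?thesis by blast
  next
    case False
    then have "x = (\<lambda>_. 0)" by auto
    then have "a \<noteq> (\<lambda>_. I)" using \<open>w \<noteq> (\<lambda>_. 0, \<lambda>_. I)\<close> xa by auto
    then obtain j where aj: "a j \<noteq> I" by auto
    with a0 have j: "j < n" by (meson not_le)
    obtain a' where a': "\<forall>l. l \<noteq> j \<longrightarrow> a' l = a l" "busy_p n a' \<le> busy_p n a"
      "(\<Sum>l<n. act_level (a' l)) < (\<Sum>l<n. act_level (a l))"
      "0 < prate n \<alpha> \<beta> u v (\<theta> (busy k n (x, a))) a a'"
      using prate_descent[OF j, where a = a, OF aj thb] by blast
    have "\<forall>l\<ge>n. a' l = I" using a'(1) a0 j by simp
    then have "(x, a') \<in> states m k n" and "state_level k n (x, a') < state_level k n w"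
      using x0 bw a'(2,3) unfolding xa states_def busy_def state_level_def by simp_all
    moreover have "0 < rate k n lam \<mu> \<alpha> \<beta> u v \<theta> w (x, a')"
      unfolding xa by (rule rate_persistent_pos[OF thb a'(4)])
    ultimately show ?thesis by blast
  qed
qed

lemma stationary_states_eq_weight:
  assumes \<theta>_nonneg: "\<forall>b\<le>m. 0 \<le> \<theta> b" and \<theta>_pos: "\<forall>b<m. 0 < \<theta> b"
    and st: "stationary (states m k n) (rate k n lam \<mu> \<alpha> \<beta> u v \<theta>) \<pi>" and w: "w \<in> states m k n"
  shows "\<pi> w = weight k n lam \<mu> \<alpha> \<beta> u v \<theta> w / (\<Sum>w\<in>states m k n. weight k n lam \<mu> \<alpha> \<beta> u v \<theta> w)"
proof (rule stationary_unique_of_reversible[OF finite_states _ _ _ _ _ st w])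
  show "(\<lambda>_. 0, \<lambda>_. I) \<in> states m k n" unfolding states_def busy_def busy_p_def by simp
  show "\<forall>w\<in>states m k n. 0 < weight k n lam \<mu> \<alpha> \<beta> u v \<theta> w"
    using weight_pos[OF \<theta>_pos] by blast
  show "\<forall>w\<in>states m k n. \<forall>w'\<in>states m k n. w \<noteq> w' \<longrightarrow> 0 \<le> rate k n lam \<mu> \<alpha> \<beta> u v \<theta> w w'"
    using \<theta>_nonneg by (auto simp: states_def intro: rate_nonneg)
  show "\<forall>w\<in>states m k n. \<forall>w'\<in>states m k n. weight k n lam \<mu> \<alpha> \<beta> u v \<theta> w * rate k n lam \<mu> \<alpha> \<beta> u v \<theta> w w'
      = weight k n lam \<mu> \<alpha> \<beta> u v \<theta> w' * rate k n lam \<mu> \<alpha> \<beta> u v \<theta> w' w"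
    using rate_balance by blast
  show "\<forall>w\<in>states m k n. w \<noteq> (\<lambda>_. 0, \<lambda>_. I) \<longrightarrow>
      (\<exists>w'\<in>states m k n. state_level k n w' < state_level k n w \<and> 0 < rate k n lam \<mu> \<alpha> \<beta> u v \<theta> w w')"
    using states_descent[OF \<theta>_nonneg] by blast
qed

end

lemma stationary_pstates_eq_pweight_busy:
  assumes \<theta>_nonneg: "\<forall>b\<le>m. 0 \<le> \<theta> b" and \<theta>_pos: "\<forall>b<m. 0 < \<theta> b"
    and st: "stationary (pstates m n) (prate_only n \<alpha> \<beta> u v \<theta>) \<pi>" and a: "a \<in> pstates m n"
  shows "\<pi> a = pweight_busy n \<alpha> \<beta> u v \<theta> 0 a / (\<Sum>a'\<in>pstates m n. pweight_busy n \<alpha> \<beta> u v \<theta> 0 a')"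
proof (rule stationary_unique_of_reversible[OF finite_pstates _ _ _ _ _ st a])
  show "(\<lambda>_. I) \<in> pstates m n" unfolding pstates_def busy_p_def by simp
  show "\<forall>a\<in>pstates m n. 0 < pweight_busy n \<alpha> \<beta> u v \<theta> 0 a"
    using pweight_busy_pos[OF \<theta>_pos] unfolding pstates_def by auto
  show "\<forall>a\<in>pstates m n. \<forall>a'\<in>pstates m n. a \<noteq> a' \<longrightarrow> 0 \<le> prate_only n \<alpha> \<beta> u v \<theta> a a'"
    unfolding prate_only_def pstates_def using \<theta>_nonneg by (auto intro: prate_nonneg)
  show "\<forall>a\<in>pstates m n. \<forall>a'\<in>pstates m n. pweight_busy n \<alpha> \<beta> u v \<theta> 0 a * prate_only n \<alpha> \<beta> u v \<theta> a a'
      = pweight_busy n \<alpha> \<beta> u v \<theta> 0 a' * prate_only n \<alpha> \<beta> u v \<theta> a' a"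
    unfolding prate_only_def using prate_balance[of 0] by simp
  show "\<forall>a\<in>pstates m n. a \<noteq> (\<lambda>_. I) \<longrightarrow> (\<exists>a'\<in>pstates m n.
      (\<Sum>l<n. act_level (a' l)) < (\<Sum>l<n. act_level (a l)) \<and> 0 < prate_only n \<alpha> \<beta> u v \<theta> a a')"
  proof (intro ballI impI)
    fix a assume a: "a \<in> pstates m n" and "a \<noteq> (\<lambda>_. I)"
    then obtain j where aj: "a j \<noteq> I" by auto
    moreover have "\<forall>l\<ge>n. a l = I" using a unfolding pstates_def by simp
    ultimately have j: "j < n" by (meson not_le)
    have thb: "0 \<le> \<theta> (busy_p n a)" using a \<theta>_nonneg unfolding pstates_def by auto
    obtain a' where a': "\<forall>l. l \<noteq> j \<longrightarrow> a' l = a l" "busy_p n a' \<le> busy_p n a"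
      "(\<Sum>l<n. act_level (a' l)) < (\<Sum>l<n. act_level (a l))"
      "0 < prate n \<alpha> \<beta> u v (\<theta> (busy_p n a)) a a'"
      using prate_descent[OF j, where a = a, OF aj thb] by blast
    have "a' \<in> pstates m n" using a a'(1,2) j unfolding pstates_def by auto
    then show "\<exists>a'\<in>pstates m n.
        (\<Sum>l<n. act_level (a' l)) < (\<Sum>l<n. act_level (a l)) \<and> 0 < prate_only n \<alpha> \<beta> u v \<theta> a a'"
      using a'(3,4) unfolding prate_only_def by blast
  qed
qed

end

theorem corollary2:
  fixes m k n :: nat
    and lam \<mu> \<alpha> \<beta> u v \<theta> :: "nat \<Rightarrow> real"
    and \<pi> :: "state \<Rightarrow> real" and \<pi>p :: "(nat \<Rightarrow> act) \<Rightarrow> real"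
  assumes "m \<ge> 1" "k \<ge> 1" "n \<ge> 1"
    and "\<forall>i<k. lam i > 0 \<and> \<mu> i > 0"
    and "\<forall>j<n. \<alpha> j > 0 \<and> \<beta> j > 0 \<and> u j > 0 \<and> v j > 0"
    and "\<forall>b\<le>m. 0 \<le> \<theta> b \<and> \<theta> b \<le> 1"
    and "\<forall>b<m. \<theta> b > 0" and "\<theta> m = 0"
    and "stationary (states m k n) (rate k n lam \<mu> \<alpha> \<beta> u v \<theta>) \<pi>"
    and "stationary (pstates m n) (prate_only n \<alpha> \<beta> u v \<theta>) \<pi>p"
  shows "(\<forall>x a. a \<in> pstates m n \<and> x + busy_p n a \<le> m \<longrightarrow>
            (\<Sum>w\<in>{w \<in> states m k n. (\<Sum>i<k. fst w i) = x \<and> snd w = a}. \<pi> w)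
            = (1 / (\<Sum>w\<in>states m k n. weight k n lam \<mu> \<alpha> \<beta> u v \<theta> w))
              * (\<Prod>r<x + busy_p n a. \<theta> r) * pweight n \<alpha> \<beta> u v a
              * (\<Sum>i<k. lam i / \<mu> i) ^ x / fact x)
       \<and> (\<forall>a\<in>pstates m n.
            \<pi>p a = (1 / (\<Sum>a'\<in>pstates m n. (\<Prod>r<busy_p n a'. \<theta> r) * pweight n \<alpha> \<beta> u v a'))
                   * (\<Prod>r<busy_p n a. \<theta> r) * pweight n \<alpha> \<beta> u v a)"
proof -
  have \<theta>_nonneg: "\<forall>b\<le>m. 0 \<le> \<theta> b" using assms(6) by simp
  note user_pos = assms(5) and class_pos = assms(4) and \<theta>_pos = assms(7)
  show ?thesis
  proof (intro conjI allI impI ballI)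
    fix x a assume xa: "a \<in> pstates m n \<and> x + busy_p n a \<le> m"
    have "(\<Sum>w\<in>{w \<in> states m k n. (\<Sum>i<k. fst w i) = x \<and> snd w = a}. \<pi> w)
        = (\<Sum>w\<in>{w \<in> states m k n. (\<Sum>i<k. fst w i) = x \<and> snd w = a}. weight k n lam \<mu> \<alpha> \<beta> u v \<theta> w)
          / (\<Sum>w\<in>states m k n. weight k n lam \<mu> \<alpha> \<beta> u v \<theta> w)"
      unfolding sum_divide_distrib
      by (rule sum.cong) (auto intro: stationary_states_eq_weight[OF user_pos class_pos \<theta>_nonneg \<theta>_pos assms(9)])
    then show "(\<Sum>w\<in>{w \<in> states m k n. (\<Sum>i<k. fst w i) = x \<and> snd w = a}. \<pi> w)
        = 1 / (\<Sum>w\<in>states m k n. weight k n lam \<mu> \<alpha> \<beta> u v \<theta> w)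
          * (\<Prod>r<x + busy_p n a. \<theta> r) * pweight n \<alpha> \<beta> u v a * (\<Sum>i<k. lam i / \<mu> i) ^ x / fact x"
      using xa by (simp add: sum_weight_occupancy pweight_busy_def)
  next
    fix a assume "a \<in> pstates m n"
    then show "\<pi>p a = 1 / (\<Sum>a'\<in>pstates m n. (\<Prod>r<busy_p n a'. \<theta> r) * pweight n \<alpha> \<beta> u v a')
        * (\<Prod>r<busy_p n a. \<theta> r) * pweight n \<alpha> \<beta> u v a"
      using stationary_pstates_eq_pweight_busy[OF user_pos \<theta>_nonneg \<theta>_pos assms(10)]
      by (simp add: pweight_busy_def)
  qed
qed

end
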